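(* Let $\mu$ be the measure associated with a sequence $(p_n,q_n)_{n\ge0}$, $0\le p_n,q_n\le1$, by the non-homogeneous Markov rule, and let $c_n=\frac{-1}{n\log2}\sum_{I\in\mathcal F_n}\mu(I)\log\mu(I)$. Then for $\mu$-almost every $x\in\mathbb K$, $$\lim_{n\to\infty}\left[\frac{\log\mu(I_n(x))}{-n\log 2}-c_n\right]=0.$$
   Context: $\mathbb K=\{0,1\}^{\mathbb N}$; $\mathcal F_n$ is the set of cylinders $I_{\epsilon_1\dots\epsilon_n}$ of generation $n$; $I_n(x)$ is the cylinder of $\mathcal F_n$ containing $x$. $\mu$: $\mu(I_0)=p_0$, $\mu(I_1)=1-p_0$, and for $n\ge1$, $I=I_{\epsilon_1\dots\epsilon_n}$, the child $I_{\epsilon_1\dots\epsilon_n0}$ receives the proportion $p_n$ (resp. $q_n$) of $\mu(I)$ and $I_{\epsilon_1\dots\epsilon_n1}$ the proportion $1-p_n$ (resp. $1-q_n$) when $\epsilon_n=0$ (resp. $\epsilon_n=1$). Convention $0\log0=0$. *)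

theory Defs
  imports "HOL-Probability.Probability"
begin

text \<open>The Cantor space K = {0,1}^N is modelled as nat => bool, with False = 0, True = 1.
  A point x corresponds to the sequence (eps_1, eps_2, ...) with eps_k = x (k - 1).\<close>

definition Kspace :: "(nat \<Rightarrow> bool) measure" where
  "Kspace = (\<Pi>\<^sub>M i\<in>(UNIV::nat set). count_space (UNIV::bool set))"

definition cylinder :: "(nat \<Rightarrow> bool) \<Rightarrow> nat \<Rightarrow> (nat \<Rightarrow> bool) set" where
  "cylinder x n = {y. \<forall>i<n. y i = x i}"

definition cylinders :: "nat \<Rightarrow> (nat \<Rightarrow> bool) set set" where
  "cylinders n = {cylinder x n | x. True}"

text \<open>Transition proportion at step k (k >= 1): from digit eps_k = a to digit eps_{k+1} = b.\<close>
definition trans_prop :: "(nat \<Rightarrow> real) \<Rightarrow> (nat \<Rightarrow> real) \<Rightarrow> nat \<Rightarrow> bool \<Rightarrow> bool \<Rightarrow> real" where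
  "trans_prop p q k a b =
     (if \<not> a then (if \<not> b then p k else 1 - p k)
             else (if \<not> b then q k else 1 - q k))"

definition markov_weight :: "(nat \<Rightarrow> real) \<Rightarrow> (nat \<Rightarrow> real) \<Rightarrow> (nat \<Rightarrow> bool) \<Rightarrow> nat \<Rightarrow> real" where
  "markov_weight p q x n =
     (if n = 0 then 1
      else (if \<not> x 0 then p 0 else 1 - p 0) *
           (\<Prod>k\<in>{1..<n}. trans_prop p q k (x (k - 1)) (x k)))"

definition entropy_coeff :: "(nat \<Rightarrow> bool) measure \<Rightarrow> nat \<Rightarrow> real" where
  "entropy_coeff M n =
     -1 / (real n * ln 2) *
     (\<Sum>I\<in>cylinders n. (if measure M I = 0 then 0 else measure M I * ln (measure M I)))"

end

theory Submission
  imports Defs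
begin

text \<open>Let I_n(x) = - ln mu(I_n(x)) be the information carried by the first n digits of x; its mean
  is n ln 2 c_n. Each new digit adds the information of one transition, whose conditional mean is the
  entropy of the current row of the transition matrix. The covariance between the accumulated
  information and the current digit is contracted by the factor |p_n - q_n| at every step and fed
  by a term of order sqrt (1 - |p_n - q_n|), so it stays O(sqrt n), and therefore
  Var I_n = O(n^(3/2)). Along n = k^8 Chebyshev's inequality makes deviations of size k^7 summably
  unlikely, so by Borel-Cantelli they eventually stop. Since I_n(x) is nondecreasing in n and its
  mean grows by at most 1 per step, the bound interpolates between consecutive eighth powers, and
  (I_n - E I_n) / n tends to 0 almost surely.\<close>

section \<open>Elementary bounds on t ln t\<close>

lemma neg_mult_ln_nonneg:
  fixes t :: real assumes "0 \<le> t" "t \<le> 1"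
  shows "0 \<le> t * - ln t"
  using assms by (cases "t = 0") (auto intro!: mult_nonneg_nonpos)

lemma neg_mult_ln_le_one_minus:
  fixes t :: real assumes "0 \<le> t"
  shows "t * - ln t \<le> 1 - t"
proof (cases "t = 0")
  case False
  then have t: "0 < t" using assms by simp
  have "ln (1 / t) \<le> 1 / t - 1" using t by (intro ln_le_minus_one) simp
  then have "t * - ln t \<le> t * (1 / t - 1)" using t by (intro mult_left_mono) (auto simp: ln_div)
  also have "\<dots> = 1 - t" using t by (simp add: field_simps)
  finally show ?thesis .
qed simp

lemma neg_mult_ln_le_1:
  fixes t :: real assumes "0 \<le> t"
  shows "t * - ln t \<le> 1"
  using neg_mult_ln_le_one_minus[OF assms] assms by linarith

lemma neg_mult_ln_via_sqrt:
  fixes t :: real assumes "0 \<le> t"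
  shows "t * - ln t = 2 * sqrt t * (sqrt t * - ln (sqrt t))"
proof -
  have "ln t = 2 * ln (sqrt t)"
    using assms by (cases "t = 0") (simp_all add: ln_sqrt)
  then show ?thesis using assms by (simp add: algebra_simps)
qed

lemma neg_mult_ln_le_sqrt:
  fixes t :: real assumes "0 \<le> t" "t \<le> 1"
  shows "t * - ln t \<le> 2 * sqrt t"
proof -
  have "2 * sqrt t * (sqrt t * - ln (sqrt t)) \<le> 2 * sqrt t * 1"
    using assms by (intro mult_left_mono neg_mult_ln_le_1) auto
  then show ?thesis using neg_mult_ln_via_sqrt[OF assms(1)] by simp
qed

lemma mult_ln_squared_le:
  fixes t :: real assumes "0 \<le> t" "t \<le> 1"
  shows "t * (ln t)\<^sup>2 \<le> 4"
proof (cases "t = 0")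
  case False
  let ?y = "sqrt t * - ln (sqrt t)"
  have y: "0 \<le> ?y" "?y \<le> 1"
    using neg_mult_ln_nonneg[of "sqrt t"] neg_mult_ln_le_1[of "sqrt t"] assms by simp_all
  have "ln t = 2 * ln (sqrt t)"
    using False assms by (simp add: ln_sqrt)
  then have "t * (ln t)\<^sup>2 = 4 * ?y\<^sup>2"
    using assms by (simp add: power_mult_distrib)
  also have "\<dots> \<le> 4 * 1\<^sup>2"
    using y by (intro mult_left_mono power_mono) auto
  finally show ?thesis by simp
qed simp

lemma binary_entropy_le_sqrt:
  fixes t :: real assumes "0 \<le> t" "t \<le> 1"
  shows "t * - ln t + (1 - t) * - ln (1 - t) \<le> 3 * sqrt t"
proof -
  have "t \<le> sqrt t"
    using assms by (intro real_le_rsqrt) (simp add: power2_eq_square mult_left_le)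
  then show ?thesis
    using neg_mult_ln_le_sqrt[OF assms] neg_mult_ln_le_one_minus[of "1 - t"] assms by simp
qed

lemma two_sqrt_le_mult_add_inverse:
  fixes s T :: real assumes "0 \<le> s" "0 < T"
  shows "2 * sqrt s \<le> s * T + 1 / T"
proof -
  have "sqrt (s * T * (1 / T)) \<le> (s * T + 1 / T) / 2"
    using assms by (intro arith_geo_mean_sqrt) auto
  then show ?thesis using assms by simp
qed

lemma mult_neg_ln_mult:
  fixes w t :: real
  assumes "0 \<le> w" "0 \<le> t"
  shows "w * t * F (- ln (w * t)) = w * t * F (- ln w - ln t)"
  using assms by (cases "w = 0 \<or> t = 0") (auto simp: ln_mult)

section \<open>Markov weights of binary words\<close>

definition words :: "nat \<Rightarrow> bool list set" where
  "words n = {rs. length rs = n}"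

lemma finite_words [simp]: "finite (words n)"
  using finite_lists_length_eq[of "UNIV :: bool set" n] by (simp add: words_def)

lemma words_0: "words 0 = {[]}"
  by (auto simp: words_def)

lemma sum_words_Suc:
  "(\<Sum>rs\<in>words (Suc n). f rs) = (\<Sum>rs\<in>words n. f (True # rs) + f (False # rs))"
proof -
  have split: "words (Suc n) = (\<lambda>rs. True # rs) ` words n \<union> (\<lambda>rs. False # rs) ` words n"
    by (auto simp: words_def length_Suc_conv)
  have "(\<Sum>rs\<in>words (Suc n). f rs)
      = (\<Sum>rs\<in>(\<lambda>rs. True # rs) ` words n. f rs) + (\<Sum>rs\<in>(\<lambda>rs. False # rs) ` words n. f rs)"
    unfolding split by (rule sum.union_disjoint) auto
  also have "\<dots> = (\<Sum>rs\<in>words n. f (True # rs)) + (\<Sum>rs\<in>words n. f (False # rs))"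
    by (simp add: sum.reindex)
  finally show ?thesis by (simp add: sum.distrib)
qed

text \<open>Words list the most recent digit first. The empty word is in state False, so the first digit
  is drawn from the row trans_prop p q 0 False = (p 0, 1 - p 0), exactly as in markov_weight.\<close>

fun state :: "bool list \<Rightarrow> bool" where
  "state [] = False"
| "state (b # _) = b"

fun word_weight :: "(nat \<Rightarrow> real) \<Rightarrow> (nat \<Rightarrow> real) \<Rightarrow> bool list \<Rightarrow> real" where
  "word_weight p q [] = 1"
| "word_weight p q (b # rs) = word_weight p q rs * trans_prop p q (length rs) (state rs) b"

locale markov_rule =
  fixes p q :: "nat \<Rightarrow> real"
  assumes p_range: "\<And>n. 0 \<le> p n \<and> p n \<le> 1"
    and q_range: "\<And>n. 0 \<le> q n \<and> q n \<le> 1"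
begin

abbreviation tr :: "nat \<Rightarrow> bool \<Rightarrow> bool \<Rightarrow> real" where
  "tr \<equiv> trans_prop p q"

abbreviation weight :: "bool list \<Rightarrow> real" where
  "weight \<equiv> word_weight p q"

lemma tr_nonneg: "0 \<le> tr n a b"
  using p_range[of n] q_range[of n] by (simp add: trans_prop_def)

lemma tr_le_1: "tr n a b \<le> 1"
  using p_range[of n] q_range[of n] by (simp add: trans_prop_def)

lemma tr_sum: "tr n a True + tr n a False = 1"
  by (simp add: trans_prop_def)

lemma tr_True: "tr n a True = (1 - p n) + (p n - q n) * of_bool a"
  by (simp add: trans_prop_def)

lemma weight_nonneg: "0 \<le> weight rs"
  by (induction rs) (auto intro!: mult_nonneg_nonneg tr_nonneg)

lemma sum_weight: "(\<Sum>rs\<in>words n. weight rs) = 1"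
proof (induction n)
  case (Suc n)
  have "(\<Sum>rs\<in>words (Suc n). weight rs)
      = (\<Sum>rs\<in>words n. weight rs * (tr (length rs) (state rs) True + tr (length rs) (state rs) False))"
    by (simp add: sum_words_Suc algebra_simps)
  then show ?case using Suc by (simp add: tr_sum)
qed (simp add: words_0)

lemma sum_weight_mult_le:
  assumes "\<And>rs. rs \<in> words n \<Longrightarrow> f rs \<le> c"
  shows "(\<Sum>rs\<in>words n. weight rs * f rs) \<le> c"
proof -
  have "(\<Sum>rs\<in>words n. weight rs * f rs) \<le> (\<Sum>rs\<in>words n. weight rs * c)"
    using assms by (intro sum_mono mult_left_mono weight_nonneg)
  then show ?thesis by (simp add: sum_distrib_right[symmetric] sum_weight)
qed

definition info :: "bool list \<Rightarrow> real" where
  "info rs = - ln (weight rs)"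

lemma sum_words_Suc_info:
  "(\<Sum>rs\<in>words (Suc n). weight rs * F (info rs) (state rs)) =
   (\<Sum>rs\<in>words n. weight rs * (tr n (state rs) True * F (info rs - ln (tr n (state rs) True)) True
                           + tr n (state rs) False * F (info rs - ln (tr n (state rs) False)) False))"
  unfolding sum_words_Suc
proof (rule sum.cong[OF refl])
  fix rs assume "rs \<in> words n"
  then have len: "length rs = n" by (simp add: words_def)
  have step: "weight (b # rs) * F (info (b # rs)) (state (b # rs))
      = weight rs * (tr n (state rs) b * F (info rs - ln (tr n (state rs) b)) b)" for b
  proof -
    have "weight (b # rs) * F (info (b # rs)) (state (b # rs))
        = weight rs * tr n (state rs) b * F (- ln (weight rs * tr n (state rs) b)) b"
      by (simp add: info_def len)
    also have "\<dots> = weight rs * tr n (state rs) b * F (- ln (weight rs) - ln (tr n (state rs) b)) b"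
      by (rule mult_neg_ln_mult[OF weight_nonneg tr_nonneg])
    finally show ?thesis by (simp add: info_def mult.assoc)
  qed
  show "weight (True # rs) * F (info (True # rs)) (state (True # rs))
      + weight (False # rs) * F (info (False # rs)) (state (False # rs))
      = weight rs * (tr n (state rs) True * F (info rs - ln (tr n (state rs) True)) True
                   + tr n (state rs) False * F (info rs - ln (tr n (state rs) False)) False)"
    by (simp only: step distrib_left)
qed

section \<open>Mean and variance of the information\<close>

definition row_entropy :: "nat \<Rightarrow> bool \<Rightarrow> real" where
  "row_entropy n a = tr n a True * - ln (tr n a True) + tr n a False * - ln (tr n a False)"

definition mean_info :: "nat \<Rightarrow> real" where
  "mean_info n = (\<Sum>rs\<in>words n. weight rs * info rs)"

definition mean_row_entropy :: "nat \<Rightarrow> real" where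
  "mean_row_entropy n = (\<Sum>rs\<in>words n. weight rs * row_entropy n (state rs))"

definition var_info :: "nat \<Rightarrow> real" where
  "var_info n = (\<Sum>rs\<in>words n. weight rs * (info rs - mean_info n)\<^sup>2)"

definition cov_info_state :: "nat \<Rightarrow> real" where
  "cov_info_state n = (\<Sum>rs\<in>words n. weight rs * ((info rs - mean_info n) * of_bool (state rs)))"

definition step_info_sq_dev :: "nat \<Rightarrow> bool \<Rightarrow> real" where
  "step_info_sq_dev n a = tr n a True * (- ln (tr n a True) - mean_row_entropy n)\<^sup>2
                        + tr n a False * (- ln (tr n a False) - mean_row_entropy n)\<^sup>2"

definition step_info_cov :: "nat \<Rightarrow> real" where
  "step_info_cov n =
     (\<Sum>rs\<in>words n.
        weight rs * (tr n (state rs) True * (- ln (tr n (state rs) True) - mean_row_entropy n)))"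

lemma row_entropy_nonneg: "0 \<le> row_entropy n a"
  unfolding row_entropy_def
  using neg_mult_ln_nonneg[OF tr_nonneg tr_le_1, of n a True]
    neg_mult_ln_nonneg[OF tr_nonneg tr_le_1, of n a False]
  by linarith

lemma row_entropy_le_1: "row_entropy n a \<le> 1"
  unfolding row_entropy_def
  using neg_mult_ln_le_one_minus[OF tr_nonneg, of n a True] neg_mult_ln_le_one_minus[OF tr_nonneg, of n a False]
    tr_sum[of n a]
  by linarith

lemma row_entropy_le_sqrt: "row_entropy n a \<le> 3 * sqrt (1 - \<bar>p n - q n\<bar>)"
proof -
  have "row_entropy n a \<le> 3 * sqrt (tr n a b)" for b
  proof -
    have "tr n a (\<not> b) = 1 - tr n a b"
      using tr_sum[of n a] by (cases b) simp_all
    then have "row_entropy n a = tr n a b * - ln (tr n a b) + (1 - tr n a b) * - ln (1 - tr n a b)"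
      unfolding row_entropy_def by (cases b) simp_all
    then show ?thesis using binary_entropy_le_sqrt[OF tr_nonneg tr_le_1] by simp
  qed
  moreover have "\<exists>b. tr n a b \<le> 1 - \<bar>p n - q n\<bar>"
    using p_range[of n] q_range[of n] by (cases a) (auto simp: trans_prop_def abs_if)
  ultimately show ?thesis by (meson mult_left_mono order_trans real_sqrt_le_iff zero_le_numeral)
qed

lemma mean_row_entropy_bounds:
  "0 \<le> mean_row_entropy n" "mean_row_entropy n \<le> 1"
  "mean_row_entropy n \<le> 3 * sqrt (1 - \<bar>p n - q n\<bar>)"
  unfolding mean_row_entropy_def
  by (auto intro!: sum_nonneg mult_nonneg_nonneg weight_nonneg row_entropy_nonneg
      sum_weight_mult_le row_entropy_le_1 row_entropy_le_sqrt)

lemma sum_weight_centered_info: "(\<Sum>rs\<in>words n. weight rs * (info rs - mean_info n)) = 0"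
  by (simp add: right_diff_distrib sum_subtractf sum_distrib_right[symmetric] sum_weight mean_info_def)

lemma mean_info_0: "mean_info 0 = 0"
  by (simp add: mean_info_def words_0 info_def)

lemma mean_info_Suc: "mean_info (Suc n) = mean_info n + mean_row_entropy n"
proof -
  have "mean_info (Suc n) =
      (\<Sum>rs\<in>words n. weight rs * (tr n (state rs) True * (info rs - ln (tr n (state rs) True))
                                + tr n (state rs) False * (info rs - ln (tr n (state rs) False))))"
    using sum_words_Suc_info[where F = "\<lambda>x b. x"] by (simp add: mean_info_def)
  also have "\<dots> = (\<Sum>rs\<in>words n. weight rs * info rs + weight rs * row_entropy n (state rs))"
  proof (intro sum.cong refl)
    fix rs
    have "tr n (state rs) True + tr n (state rs) False = 1" by (rule tr_sum)
    then show "weight rs * (tr n (state rs) True * (info rs - ln (tr n (state rs) True))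
                + tr n (state rs) False * (info rs - ln (tr n (state rs) False)))
             = weight rs * info rs + weight rs * row_entropy n (state rs)"
      unfolding row_entropy_def by algebra
  qed
  finally show ?thesis by (simp add: sum.distrib mean_info_def mean_row_entropy_def)
qed

lemma mono_mean_info: "mono mean_info"
  unfolding mono_iff_le_Suc by (simp add: mean_info_Suc mean_row_entropy_bounds)

lemma mean_info_increment_le: "m \<le> n \<Longrightarrow> mean_info n - mean_info m \<le> real n - real m"
proof (induction n rule: dec_induct)
  case (step n)
  then show ?case using mean_info_Suc[of n] mean_row_entropy_bounds(2)[of n] by simp
qed simp

lemma step_info_sq_dev_le: "step_info_sq_dev n a \<le> 9"
proof -
  have "tr n a b * (- ln (tr n a b) - mean_row_entropy n)\<^sup>2 \<le> 4 + tr n a b" for b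
  proof -
    let ?t = "tr n a b" and ?g = "mean_row_entropy n"
    have "0 \<le> - ln ?t"
      using tr_nonneg[of n a b] tr_le_1[of n a b] by (cases "?t = 0") simp_all
    then have "0 \<le> - ln ?t * ?g" using mean_row_entropy_bounds(1) by (rule mult_nonneg_nonneg)
    moreover have "?g\<^sup>2 \<le> 1" using mean_row_entropy_bounds(1,2) by (simp add: power_le_one)
    moreover have "(- ln ?t - ?g)\<^sup>2 = (ln ?t)\<^sup>2 + ?g\<^sup>2 - 2 * (- ln ?t * ?g)"
      by (simp add: power2_eq_square algebra_simps)
    ultimately have "(- ln ?t - ?g)\<^sup>2 \<le> (ln ?t)\<^sup>2 + 1"
      by linarith
    then have "?t * (- ln ?t - ?g)\<^sup>2 \<le> ?t * ((ln ?t)\<^sup>2 + 1)"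
      by (rule mult_left_mono) (rule tr_nonneg)
    then show ?thesis using mult_ln_squared_le[OF tr_nonneg tr_le_1, of n a b] by (simp add: algebra_simps)
  qed
  from this[of True] this[of False] show ?thesis
    unfolding step_info_sq_dev_def using tr_sum[of n a] by simp
qed

lemma var_info_0: "var_info 0 = 0"
  by (simp add: var_info_def words_0 info_def mean_info_0)

lemma cov_info_state_0: "cov_info_state 0 = 0"
  by (simp add: cov_info_state_def words_0)

text \<open>The new digit adds the information - ln tr n a b of the transition just taken, whose conditional
  mean row_entropy n a depends on the past only through the current state a; hence the cross term
  with the old deviation is a multiple of cov_info_state n.\<close>

lemma var_info_Suc:
  "var_info (Suc n) = var_info n + 2 * (row_entropy n True - row_entropy n False) * cov_info_state n
                      + (\<Sum>rs\<in>words n. weight rs * step_info_sq_dev n (state rs))"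
proof -
  let ?d = "\<lambda>rs. info rs - mean_info n" and ?g = "mean_row_entropy n" and ?G = "row_entropy n"
  have "var_info (Suc n) = (\<Sum>rs\<in>words n. weight rs *
          (tr n (state rs) True * (info rs - ln (tr n (state rs) True) - (mean_info n + ?g))\<^sup>2 +
           tr n (state rs) False * (info rs - ln (tr n (state rs) False) - (mean_info n + ?g))\<^sup>2))"
    using sum_words_Suc_info[where F = "\<lambda>x b. (x - (mean_info n + ?g))\<^sup>2"]
    by (simp add: var_info_def mean_info_Suc)
  also have "\<dots> = (\<Sum>rs\<in>words n. weight rs * (?d rs)\<^sup>2 + 2 * (weight rs * ?d rs * ?G (state rs))
                     - 2 * ?g * (weight rs * ?d rs) + weight rs * step_info_sq_dev n (state rs))"
  proof (intro sum.cong refl)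
    fix rs
    have "tr n (state rs) True + tr n (state rs) False = 1" by (rule tr_sum)
    then show "weight rs *
          (tr n (state rs) True * (info rs - ln (tr n (state rs) True) - (mean_info n + ?g))\<^sup>2 +
           tr n (state rs) False * (info rs - ln (tr n (state rs) False) - (mean_info n + ?g))\<^sup>2)
        = weight rs * (?d rs)\<^sup>2 + 2 * (weight rs * ?d rs * ?G (state rs))
          - 2 * ?g * (weight rs * ?d rs) + weight rs * step_info_sq_dev n (state rs)"
      unfolding row_entropy_def step_info_sq_dev_def power2_eq_square by algebra
  qed
  also have "\<dots> = var_info n + 2 * (\<Sum>rs\<in>words n. weight rs * ?d rs * ?G (state rs))
                  + (\<Sum>rs\<in>words n. weight rs * step_info_sq_dev n (state rs))"
    by (simp add: sum.distrib sum_subtractf sum_distrib_left[symmetric] var_info_def sum_weight_centered_info)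
  also have "(\<Sum>rs\<in>words n. weight rs * ?d rs * ?G (state rs))
           = (\<Sum>rs\<in>words n. ?G False * (weight rs * ?d rs)
                            + (?G True - ?G False) * (weight rs * (?d rs * of_bool (state rs))))"
    by (intro sum.cong refl) (simp add: algebra_simps)
  also have "\<dots> = (?G True - ?G False) * cov_info_state n"
    by (simp add: sum.distrib sum_distrib_left[symmetric] sum_weight_centered_info cov_info_state_def)
  finally show ?thesis by simp
qed

lemma cov_info_state_Suc: "cov_info_state (Suc n) = (p n - q n) * cov_info_state n + step_info_cov n"
proof -
  let ?d = "\<lambda>rs. info rs - mean_info n" and ?g = "mean_row_entropy n"
  have "cov_info_state (Suc n) = (\<Sum>rs\<in>words n. weight rs *
          (tr n (state rs) True * (info rs - ln (tr n (state rs) True) - (mean_info n + ?g))))"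
    using sum_words_Suc_info[where F = "\<lambda>x b. (x - (mean_info n + ?g)) * of_bool b"]
    by (simp add: cov_info_state_def mean_info_Suc)
  also have "\<dots> = (\<Sum>rs\<in>words n. (1 - p n) * (weight rs * ?d rs)
                     + (p n - q n) * (weight rs * (?d rs * of_bool (state rs)))
                     + weight rs * (tr n (state rs) True * (- ln (tr n (state rs) True) - ?g)))"
    by (intro sum.cong refl) (simp only: tr_True, simp add: algebra_simps)
  also have "\<dots> = (p n - q n) * cov_info_state n + step_info_cov n"
    by (simp add: sum.distrib sum_distrib_left[symmetric] sum_weight_centered_info
        cov_info_state_def step_info_cov_def)
  finally show ?thesis .
qed

lemma abs_step_info_cov_le: "\<bar>step_info_cov n\<bar> \<le> mean_row_entropy n"
proof -
  let ?t = "\<lambda>rs. tr n (state rs) True"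
  define h where "h = (\<Sum>rs\<in>words n. weight rs * (?t rs * - ln (?t rs)))"
  define s where "s = (\<Sum>rs\<in>words n. weight rs * ?t rs)"
  have nonneg: "0 \<le> tr n a b * - ln (tr n a b)" for a b
    by (intro neg_mult_ln_nonneg tr_nonneg tr_le_1)
  have h: "0 \<le> h" "h \<le> mean_row_entropy n"
    unfolding h_def mean_row_entropy_def row_entropy_def
    by (rule sum_nonneg, rule mult_nonneg_nonneg[OF weight_nonneg nonneg])
      (rule sum_mono, rule mult_left_mono[OF le_add_same_cancel1[THEN iffD2, OF nonneg] weight_nonneg])
  have s: "0 \<le> s" "s \<le> 1"
    unfolding s_def by (auto intro!: sum_nonneg mult_nonneg_nonneg weight_nonneg tr_nonneg
        sum_weight_mult_le tr_le_1)
  have "step_info_cov n = h - mean_row_entropy n * s"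
    by (simp add: step_info_cov_def h_def s_def algebra_simps sum_subtractf sum_distrib_left)
  moreover have "0 \<le> mean_row_entropy n * s" "mean_row_entropy n * s \<le> mean_row_entropy n"
    using s mean_row_entropy_bounds(1)[of n] by (auto intro: mult_left_le)
  ultimately show ?thesis using h by linarith
qed

lemma abs_cov_info_state_Suc_le:
  "\<bar>cov_info_state (Suc n)\<bar> \<le> \<bar>p n - q n\<bar> * \<bar>cov_info_state n\<bar> + mean_row_entropy n"
  using abs_triangle_ineq[of "(p n - q n) * cov_info_state n" "step_info_cov n"] abs_step_info_cov_le[of n]
  by (simp add: cov_info_state_Suc abs_mult)

text \<open>The covariance contracts by the factor l = |p n - q n| while the forcing term is of order
  sqrt (1 - l); AM-GM in the form 2 sqrt (1 - l) \<le> (1 - l) T + 1 / T balances the two.\<close>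

lemma abs_cov_info_state_le:
  assumes T: "0 < T"
  shows "\<bar>cov_info_state n\<bar> \<le> 2 * T + 2 * real n / T"
proof (induction n)
  case 0
  then show ?case using T by (simp add: cov_info_state_0)
next
  case (Suc n)
  define l where "l = \<bar>p n - q n\<bar>"
  have l: "0 \<le> l" "l \<le> 1" using p_range[of n] q_range[of n] by (auto simp: l_def abs_if)
  have "0 \<le> (1 - l) * T" "0 \<le> 1 / T" "2 / T = 2 * (1 / T)" using l T by auto
  then have forcing: "3 * sqrt (1 - l) \<le> 2 * ((1 - l) * T) + 2 / T"
    using two_sqrt_le_mult_add_inverse[of "1 - l" T] l T by linarith
  have "\<bar>cov_info_state (Suc n)\<bar> \<le> l * (2 * T + 2 * real n / T) + 3 * sqrt (1 - l)"
    using abs_cov_info_state_Suc_le[of n] mean_row_entropy_bounds(3)[of n]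
      mult_left_mono[OF Suc l(1)] unfolding l_def by linarith
  also have "\<dots> \<le> l * (2 * T) + l * (2 * real n / T) + (2 * ((1 - l) * T) + 2 / T)"
    using forcing by (simp add: distrib_left)
  also have "\<dots> \<le> 2 * T + 2 * real (Suc n) / T"
    using l T mult_left_le_one_le[of "2 * real n / T" l] by (simp add: algebra_simps add_divide_distrib)
  finally show ?case .
qed

lemma var_info_Suc_le: "var_info (Suc n) \<le> var_info n + 2 * \<bar>cov_info_state n\<bar> + 9"
proof -
  let ?G = "row_entropy n"
  have "\<bar>?G True - ?G False\<bar> \<le> 1"
    using row_entropy_nonneg[of n True] row_entropy_nonneg[of n False]
      row_entropy_le_1[of n True] row_entropy_le_1[of n False]
    by (auto simp: abs_le_iff)
  then have "(?G True - ?G False) * cov_info_state n \<le> \<bar>cov_info_state n\<bar>"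
    using abs_ge_self[of "(?G True - ?G False) * cov_info_state n"]
      mult_right_mono[of "\<bar>?G True - ?G False\<bar>" 1 "\<bar>cov_info_state n\<bar>"]
    by (simp add: abs_mult)
  moreover have "(\<Sum>rs\<in>words n. weight rs * step_info_sq_dev n (state rs)) \<le> 9"
    by (intro sum_weight_mult_le step_info_sq_dev_le)
  ultimately show ?thesis using var_info_Suc[of n] by linarith
qed

lemma var_info_le:
  assumes T: "0 < T"
  shows "var_info n \<le> real n * (4 * T + 4 * real n / T + 9)"
proof -
  let ?X = "4 * T + 4 * real n / T + 9"
  have "var_info m \<le> real m * ?X" if "m \<le> n" for m
    using that
  proof (induction m)
    case (Suc m)
    have "2 * real m / T \<le> 2 * real n / T"
      using Suc.prems T by (simp add: divide_right_mono)
    then have "2 * \<bar>cov_info_state m\<bar> + 9 \<le> ?X"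
      using abs_cov_info_state_le[OF T, of m] by linarith
    moreover have "real (Suc m) * ?X = real m * ?X + ?X"
      by (simp add: algebra_simps add_divide_distrib)
    ultimately show ?case
      using var_info_Suc_le[of m] Suc by linarith
  qed (simp add: var_info_0)
  then show ?thesis by simp
qed

lemma var_info_eighth_power_le: "var_info ((k + 1) ^ 8) \<le> 17 * (real k + 1) ^ 12"
proof -
  define u where "u = real k + 1"
  have u: "1 \<le> u" by (simp add: u_def)
  have n: "real ((k + 1) ^ 8) = u ^ 8" by (simp add: u_def add.commute)
  have "var_info ((k + 1) ^ 8) \<le> u ^ 8 * (4 * u ^ 4 + 4 * u ^ 8 / u ^ 4 + 9)"
    using var_info_le[of "u ^ 4" "(k + 1) ^ 8"] u by (simp only: n) simp
  also have "4 * u ^ 8 / u ^ 4 = 4 * u ^ 4"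
    using u by (simp add: field_simps flip: power_add)
  also have "u ^ 8 * (4 * u ^ 4 + 4 * u ^ 4 + 9) = 8 * u ^ 12 + 9 * u ^ 8"
    by (simp add: algebra_simps flip: power_add)
  also have "\<dots> \<le> 17 * u ^ 12"
    using power_increasing[of 8 12 u] u by simp
  finally show ?thesis by (simp only: u_def)
qed

end

section \<open>Interpolation between eighth powers\<close>

lemma eighth_power_increment_bounds:
  fixes u :: real assumes "1 \<le> u"
  shows "(u + 1) ^ 8 - u ^ 8 \<le> 255 * u ^ 7" "(u + 1) ^ 7 \<le> 128 * u ^ 7"
proof -
  have binomial: "(u + 1) ^ 8 = u ^ 8 + 8 * u ^ 7 + 28 * u ^ 6 + 56 * u ^ 5 + 70 * u ^ 4
                              + 56 * u ^ 3 + 28 * u ^ 2 + 8 * u + 1"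
    by algebra
  have "u ^ i \<le> u ^ 7" if "i \<le> 7" for i
    using assms that by (intro power_increasing) auto
  from this[of 0] this[of 1] this[of 2] this[of 3] this[of 4] this[of 5] this[of 6]
  show "(u + 1) ^ 8 - u ^ 8 \<le> 255 * u ^ 7" unfolding binomial by simp
  have "(u + 1) ^ 7 \<le> (2 * u) ^ 7" using assms by (intro power_mono) auto
  then show "(u + 1) ^ 7 \<le> 128 * u ^ 7" by (simp add: power_mult_distrib)
qed

lemma nat_between_eighth_powers: "1 \<le> n \<Longrightarrow> \<exists>j. (j + 1) ^ 8 \<le> n \<and> n < (j + 2 :: nat) ^ 8"
proof (induction n rule: dec_induct)
  case base
  show ?case by (rule exI[of _ 0]) (simp add: eval_nat_numeral)
next
  case (step n)
  then obtain j where j: "(j + 1) ^ 8 \<le> n" "n < (j + 2 :: nat) ^ 8" by blast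
  show ?case
  proof (cases "Suc n < (j + 2) ^ 8")
    case True
    then show ?thesis using j by (intro exI[of _ j]) simp
  next
    case False
    then have next_power: "(Suc j + 1) ^ 8 = Suc n" using j by simp
    have "(Suc j + 1) ^ 8 < (Suc j + 2 :: nat) ^ 8" by (rule power_strict_mono) auto
    then have "Suc n < (Suc j + 2) ^ 8" unfolding next_power .
    with next_power show ?thesis by (metis order_refl)
  qed
qed

lemma abs_diff_le_between:
  fixes a e :: "nat \<Rightarrow> real"
  assumes "mono a" "mono e" "\<And>m n. m \<le> n \<Longrightarrow> e n - e m \<le> real n - real m"
    and "m \<le> n" "n \<le> m'"
  shows "\<bar>a n - e n\<bar> \<le> max \<bar>a m - e m\<bar> \<bar>a m' - e m'\<bar> + (real m' - real m)"
proof -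
  have "a m \<le> a n" "a n \<le> a m'" "e m \<le> e n" "e n \<le> e m'"
    using assms(1,2,4,5) by (auto dest: monoD)
  moreover have "e m' - e m \<le> real m' - real m"
    using assms(3-5) by simp
  ultimately show ?thesis by (simp add: abs_le_iff) linarith
qed

lemma abs_diff_div_le_between_eighth_powers:
  fixes a e :: "nat \<Rightarrow> real"
  assumes mono: "mono a" "mono e"
    and lipschitz: "\<And>m n. m \<le> n \<Longrightarrow> e n - e m \<le> real n - real m"
    and close: "\<bar>a ((j + 1) ^ 8) - e ((j + 1) ^ 8)\<bar> < (real j + 1) ^ 7"
      "\<bar>a ((j + 2) ^ 8) - e ((j + 2) ^ 8)\<bar> < (real j + 2) ^ 7"
    and n: "(j + 1) ^ 8 \<le> n" "n \<le> (j + 2) ^ 8"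
  shows "\<bar>a n - e n\<bar> / real n \<le> 383 / (real j + 1)"
proof -
  define u where "u = real j + 1"
  have u: "1 \<le> u" by (simp add: u_def)
  have "\<bar>a n - e n\<bar> \<le> max \<bar>a ((j + 1) ^ 8) - e ((j + 1) ^ 8)\<bar> \<bar>a ((j + 2) ^ 8) - e ((j + 2) ^ 8)\<bar>
                        + (real ((j + 2) ^ 8) - real ((j + 1) ^ 8))"
    using n by (intro abs_diff_le_between[OF mono lipschitz]) auto
  also have "\<dots> \<le> max (u ^ 7) ((u + 1) ^ 7) + ((u + 1) ^ 8 - u ^ 8)"
    using close by (intro add_mono max.mono) (auto simp: u_def add_ac)
  also have "\<dots> \<le> 383 * u ^ 7"
    using eighth_power_increment_bounds[OF u] u by (simp add: max_def)
  finally have diff: "\<bar>a n - e n\<bar> \<le> 383 * u ^ 7" .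
  have "u ^ 8 = real ((j + 1) ^ 8)" by (simp add: u_def add.commute)
  also have "\<dots> \<le> real n" using n(1) by (simp only: of_nat_le_iff)
  finally have "u ^ 8 \<le> real n" .
  then have "\<bar>a n - e n\<bar> / real n \<le> 383 * u ^ 7 / u ^ 8"
    using diff u by (intro frac_le) auto
  also have "u ^ 8 = u ^ 7 * u" by (simp add: numeral_eq_Suc)
  finally show ?thesis using u by (simp add: u_def)
qed

lemma tendsto_diff_div_zero_of_eighth_powers:
  fixes a e :: "nat \<Rightarrow> real"
  assumes mono: "mono a" "mono e"
    and lipschitz: "\<And>m n. m \<le> n \<Longrightarrow> e n - e m \<le> real n - real m"
    and close: "eventually (\<lambda>k. \<bar>a ((k + 1) ^ 8) - e ((k + 1) ^ 8)\<bar> < (real k + 1) ^ 7) sequentially"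
  shows "(\<lambda>n. (a n - e n) / real n) \<longlonglongrightarrow> 0"
proof (rule LIMSEQ_I)
  fix r :: real assume r: "0 < r"
  obtain K where K: "\<And>k. K \<le> k \<Longrightarrow> \<bar>a ((k + 1) ^ 8) - e ((k + 1) ^ 8)\<bar> < (real k + 1) ^ 7"
    using close by (auto simp: eventually_sequentially)
  obtain m where m: "383 / r < real m" using reals_Archimedean2 by blast
  show "\<exists>n0. \<forall>n\<ge>n0. norm ((a n - e n) / real n - 0) < r"
  proof (intro exI allI impI)
    fix n assume n: "(max K m + 1) ^ 8 \<le> n"
    then have "1 \<le> n" by (meson le_trans one_le_power le_add2)
    then obtain j where j: "(j + 1) ^ 8 \<le> n" "n < (j + 2) ^ 8"
      using nat_between_eighth_powers by blast
    have "(max K m + 1) ^ 8 < (j + 2) ^ 8" using n j(2) by linarith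
    then have jK: "K \<le> j" "m \<le> j" by (auto dest: power_less_imp_less_base)
    have "\<bar>a n - e n\<bar> / real n \<le> 383 / (real j + 1)"
      using K[of j] K[of "j + 1"] jK j
      by (intro abs_diff_div_le_between_eighth_powers[OF mono lipschitz]) (auto simp: add_ac)
    also have "\<dots> < r"
    proof -
      have "383 / r < real j + 1" using m jK(2) by simp
      then show ?thesis using r by (simp add: field_simps)
    qed
    finally show "norm ((a n - e n) / real n - 0) < r" by simp
  qed
qed

section \<open>The measure of cylinders\<close>

definition prefix_word :: "(nat \<Rightarrow> bool) \<Rightarrow> nat \<Rightarrow> bool list" where
  "prefix_word x n = rev (map x [0..<n])"

lemma prefix_word_0 [simp]: "prefix_word x 0 = []"
  by (simp add: prefix_word_def)

lemma prefix_word_Suc [simp]: "prefix_word x (Suc n) = x n # prefix_word x n"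
  by (simp add: prefix_word_def)

lemma length_prefix_word [simp]: "length (prefix_word x n) = n"
  by (simp add: prefix_word_def)

lemma prefix_word_in_words [simp]: "prefix_word x n \<in> words n"
  by (simp add: words_def)

lemma prefix_word_eq_iff: "prefix_word y n = prefix_word x n \<longleftrightarrow> (\<forall>i<n. y i = x i)"
  by (auto simp: prefix_word_def map_eq_conv)

lemma cylinder_eq_prefix_word: "cylinder x n = {y. prefix_word y n = prefix_word x n}"
  by (auto simp: cylinder_def prefix_word_eq_iff)

definition word_point :: "bool list \<Rightarrow> nat \<Rightarrow> bool" where
  "word_point rs i = (i < length rs \<and> rev rs ! i)"

lemma prefix_word_point: "prefix_word (word_point rs) (length rs) = rs"
proof -
  have "map (word_point rs) [0..<length rs] = map (\<lambda>i. rev rs ! i) [0..<length (rev rs)]"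
    by (rule map_cong) (auto simp: word_point_def)
  also have "\<dots> = rev rs" by (rule map_nth)
  finally show ?thesis by (simp add: prefix_word_def)
qed

lemma prefix_word_preimage_eq_cylinder:
  "length rs = n \<Longrightarrow> {y. prefix_word y n = rs} = cylinder (word_point rs) n"
  using prefix_word_point[of rs] by (simp add: cylinder_eq_prefix_word)

lemma space_Kspace: "space Kspace = UNIV"
  by (simp add: Kspace_def space_PiM)

context markov_rule
begin

lemma weight_prefix_word: "weight (prefix_word x n) = markov_weight p q x n"
proof (induction n)
  case (Suc n)
  show ?case
  proof (cases n)
    case (Suc m)
    have "markov_weight p q x (Suc n) = markov_weight p q x n * tr n (x m) (x n)"
      unfolding markov_weight_def using Suc by (simp add: prod.atLeastLessThan_Suc)
    then show ?thesis using Suc.IH Suc by simp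
  qed (simp add: markov_weight_def trans_prop_def)
qed (simp add: markov_weight_def)

end

locale markov_measure = markov_rule p q + prob_space M
  for p q :: "nat \<Rightarrow> real" and M :: "(nat \<Rightarrow> bool) measure" +
  assumes sets_M: "sets M = sets Kspace"
    and measure_cylinder: "\<And>x n. measure M (cylinder x n) = markov_weight p q x n"
begin

lemma space_M: "space M = UNIV"
  using sets_eq_imp_space_eq[OF sets_M] space_Kspace by simp

lemma sets_coordinate: "{y. y i = c} \<in> sets M"
proof -
  have "(\<lambda>y. y i) \<in> measurable Kspace (count_space UNIV)"
    unfolding Kspace_def by (rule measurable_component_singleton) simp
  then have "(\<lambda>y. y i) -` {c} \<inter> space Kspace \<in> sets Kspace" by (rule measurable_sets) simp
  then show ?thesis using sets_M space_Kspace by (simp add: vimage_def)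
qed

lemma sets_cylinder: "cylinder x n \<in> sets M"
proof (induction n)
  case 0
  then show ?case using sets.top[of M] by (simp add: cylinder_def space_M)
next
  case (Suc n)
  have "cylinder x (Suc n) = cylinder x n \<inter> {y. y n = x n}"
    by (auto simp: cylinder_def less_Suc_eq)
  then show ?case using Suc sets_coordinate by simp
qed

lemma sets_prefix_word_in:
  assumes "B \<subseteq> words n"
  shows "{y. prefix_word y n \<in> B} \<in> sets M"
proof -
  have "{y. prefix_word y n \<in> B} = (\<Union>rs\<in>B. cylinder (word_point rs) n)"
    using assms by (auto simp: words_def simp flip: prefix_word_preimage_eq_cylinder)
  then show ?thesis
    using finite_subset[OF assms finite_words] sets_cylinder by (simp add: sets.finite_UN)
qed

lemma measure_prefix_word_eq:
  assumes "length rs = n"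
  shows "measure M {y. prefix_word y n = rs} = weight rs"
  using assms prefix_word_point[of rs]
  by (simp add: prefix_word_preimage_eq_cylinder measure_cylinder flip: weight_prefix_word)

lemma measure_prefix_word_in:
  assumes "B \<subseteq> words n"
  shows "measure M {y. prefix_word y n \<in> B} = (\<Sum>rs\<in>B. weight rs)"
proof -
  have "{y. prefix_word y n \<in> B} = (\<Union>rs\<in>B. {y. prefix_word y n = rs})" by auto
  moreover have "measure M (\<Union>rs\<in>B. {y. prefix_word y n = rs})
      = (\<Sum>rs\<in>B. measure M {y. prefix_word y n = rs})"
    using finite_subset[OF assms finite_words] assms sets_prefix_word_in[of "{_}" n]
    by (intro measure_finite_Union) (auto simp: disjoint_family_on_def)
  ultimately show ?thesis
    using assms by (auto simp: words_def measure_prefix_word_eq intro!: sum.cong)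
qed

lemma cylinders_eq_image_words: "cylinders n = (\<lambda>rs. {y. prefix_word y n = rs}) ` words n"
proof
  show "cylinders n \<subseteq> (\<lambda>rs. {y. prefix_word y n = rs}) ` words n"
    by (auto simp: cylinders_def cylinder_eq_prefix_word)
  show "(\<lambda>rs. {y. prefix_word y n = rs}) ` words n \<subseteq> cylinders n"
    by (auto simp: cylinders_def words_def prefix_word_preimage_eq_cylinder)
qed

lemma inj_on_prefix_word_preimage: "inj_on (\<lambda>rs. {y. prefix_word y n = rs}) (words n)"
proof (rule inj_onI)
  fix rs rs' assume "rs \<in> words n" "{y. prefix_word y n = rs} = {y. prefix_word y n = rs'}"
  moreover have "word_point rs \<in> {y. prefix_word y n = rs}"
    using \<open>rs \<in> words n\<close> prefix_word_point[of rs] by (simp add: words_def)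
  ultimately show "rs = rs'" by auto
qed

lemma entropy_coeff_eq: "entropy_coeff M n = mean_info n / (real n * ln 2)"
proof -
  have "(\<Sum>I\<in>cylinders n. (if measure M I = 0 then 0 else measure M I * ln (measure M I)))
      = (\<Sum>rs\<in>words n. (if weight rs = 0 then 0 else weight rs * ln (weight rs)))"
    unfolding cylinders_eq_image_words
    by (subst sum.reindex[OF inj_on_prefix_word_preimage])
      (auto intro!: sum.cong simp: measure_prefix_word_eq words_def)
  also have "\<dots> = - mean_info n"
    by (auto simp: mean_info_def info_def sum_negf[symmetric] intro!: sum.cong)
  finally show ?thesis by (simp add: entropy_coeff_def)
qed

lemma measure_info_deviation_le:
  assumes c: "0 < c"
  shows "measure M {y. c \<le> \<bar>info (prefix_word y n) - mean_info n\<bar>} \<le> var_info n / c\<^sup>2"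
proof -
  let ?B = "{rs\<in>words n. c \<le> \<bar>info rs - mean_info n\<bar>}"
  have "measure M {y. c \<le> \<bar>info (prefix_word y n) - mean_info n\<bar>} = (\<Sum>rs\<in>?B. weight rs)"
    by (subst measure_prefix_word_in[symmetric]) auto
  also have "\<dots> \<le> (\<Sum>rs\<in>?B. weight rs * (info rs - mean_info n)\<^sup>2 / c\<^sup>2)"
  proof (rule sum_mono)
    fix rs assume "rs \<in> ?B"
    then have "c\<^sup>2 \<le> \<bar>info rs - mean_info n\<bar>\<^sup>2" using c by (intro power_mono) auto
    then have "weight rs * 1 \<le> weight rs * ((info rs - mean_info n)\<^sup>2 / c\<^sup>2)"
      using c by (intro mult_left_mono weight_nonneg) simp_all
    then show "weight rs \<le> weight rs * (info rs - mean_info n)\<^sup>2 / c\<^sup>2" by simp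
  qed
  also have "\<dots> \<le> (\<Sum>rs\<in>words n. weight rs * (info rs - mean_info n)\<^sup>2 / c\<^sup>2)"
    by (rule sum_mono2) (auto intro!: divide_nonneg_nonneg mult_nonneg_nonneg weight_nonneg)
  also have "\<dots> = var_info n / c\<^sup>2" by (simp add: var_info_def sum_divide_distrib)
  finally show ?thesis .
qed

section \<open>Almost sure convergence\<close>

definition deviation_event :: "nat \<Rightarrow> (nat \<Rightarrow> bool) set" where
  "deviation_event k =
     {y. (real k + 1) ^ 7 \<le> \<bar>info (prefix_word y ((k + 1) ^ 8)) - mean_info ((k + 1) ^ 8)\<bar>}"

lemma sets_deviation_event: "deviation_event k \<in> sets M"
proof -
  let ?N = "(k + 1) ^ 8"
  have "deviation_event k =
      {y. prefix_word y ?N \<in> {rs\<in>words ?N. (real k + 1) ^ 7 \<le> \<bar>info rs - mean_info ?N\<bar>}}"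
    by (auto simp: deviation_event_def)
  also have "\<dots> \<in> sets M" by (rule sets_prefix_word_in) auto
  finally show ?thesis .
qed

lemma measure_deviation_event_le: "measure M (deviation_event k) \<le> 17 / (real k + 1)\<^sup>2"
proof -
  define u where "u = real k + 1"
  have u: "1 \<le> u" by (simp add: u_def)
  have "measure M (deviation_event k) \<le> var_info ((k + 1) ^ 8) / (u ^ 7)\<^sup>2"
    unfolding deviation_event_def u_def by (rule measure_info_deviation_le) simp
  also have "\<dots> \<le> 17 * u ^ 12 / (u ^ 7)\<^sup>2"
    using var_info_eighth_power_le[of k] by (intro divide_right_mono) (simp_all add: u_def)
  also have "\<dots> = 17 / u\<^sup>2"
    using u by (simp add: field_simps flip: power_add power_mult)
  finally show ?thesis by (simp add: u_def)
qed

lemma summable_measure_deviation_event: "summable (\<lambda>k. measure M (deviation_event k))"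
proof (rule summable_comparison_test')
  have "summable (\<lambda>k. inverse (real (Suc k) ^ 2))"
    by (rule summable_Suc_iff[THEN iffD2]) (rule inverse_power_summable, simp)
  then show "summable (\<lambda>k. 17 / (real k + 1)\<^sup>2)"
    using summable_mult[of _ 17] by (simp add: divide_inverse add.commute)
  show "norm (measure M (deviation_event k)) \<le> 17 / (real k + 1)\<^sup>2" for k
    using measure_deviation_event_le[of k] by simp
qed

lemma AE_eventually_info_close:
  "AE y in M. eventually (\<lambda>k. \<bar>info (prefix_word y ((k + 1) ^ 8)) - mean_info ((k + 1) ^ 8)\<bar>
                                < (real k + 1) ^ 7) sequentially"
proof -
  have "AE y in M. eventually (\<lambda>k. y \<in> space M - deviation_event k) sequentially"
    using sets_deviation_event summable_measure_deviation_event
    by (intro borel_cantelli_AE1) (auto simp: less_top[symmetric])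
  then show ?thesis
    by (rule AE_mp) (auto elim!: eventually_mono simp: deviation_event_def not_le)
qed

lemma AE_weight_prefix_word_pos: "AE y in M. \<forall>n. 0 < weight (prefix_word y n)"
proof (subst AE_all_countable, intro allI)
  fix n
  let ?N = "{y. prefix_word y n \<in> {rs\<in>words n. weight rs = 0}}"
  have "?N \<in> sets M" by (rule sets_prefix_word_in) auto
  moreover have "measure M ?N = 0" by (subst measure_prefix_word_in) auto
  ultimately have "?N \<in> null_sets M" by (simp add: null_sets_def emeasure_eq_measure)
  moreover have "{y\<in>space M. \<not> 0 < weight (prefix_word y n)} \<subseteq> ?N"
    using weight_nonneg by (auto simp: less_le)
  ultimately show "AE y in M. 0 < weight (prefix_word y n)" by (rule AE_I')
qed

text \<open>Positivity matters because ln 0 = 0 in Isabelle: without it the information could drop.\<close>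

lemma mono_info_prefix_word:
  assumes "\<And>n. 0 < weight (prefix_word y n)"
  shows "mono (\<lambda>n. info (prefix_word y n))"
  unfolding mono_iff_le_Suc
proof
  fix n
  have "weight (prefix_word y n) * tr n (state (prefix_word y n)) (y n) \<le> weight (prefix_word y n) * 1"
    by (rule mult_left_mono[OF tr_le_1 weight_nonneg])
  then have "weight (prefix_word y (Suc n)) \<le> weight (prefix_word y n)" by simp
  then show "info (prefix_word y n) \<le> info (prefix_word y (Suc n))"
    using assms[of n] assms[of "Suc n"] by (simp add: info_def)
qed

lemma normalized_info_eq:
  "ln (measure M (cylinder y n)) / (- real n * ln 2) - entropy_coeff M n
     = (info (prefix_word y n) - mean_info n) / real n * (1 / ln 2)"
  by (simp add: measure_cylinder info_def entropy_coeff_eq diff_divide_distrib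
      flip: weight_prefix_word)

lemma AE_normalized_info_tendsto_zero:
  "AE y in M. ((\<lambda>n. ln (measure M (cylinder y n)) / (- real n * ln 2) - entropy_coeff M n)
                 \<longlongrightarrow> 0) sequentially"
  using AE_weight_prefix_word_pos AE_eventually_info_close
proof eventually_elim
  case (elim y)
  have "(\<lambda>n. (info (prefix_word y n) - mean_info n) / real n) \<longlonglongrightarrow> 0"
    using elim by (intro tendsto_diff_div_zero_of_eighth_powers mono_info_prefix_word
        mono_mean_info mean_info_increment_le) auto
  then show ?case unfolding normalized_info_eq by (rule tendsto_mult_left_zero)
qed

end

theorem mainTheorem6:
  fixes p q :: "nat \<Rightarrow> real" and M :: "(nat \<Rightarrow> bool) measure"
  assumes p_range: "\<And>n. 0 \<le> p n \<and> p n \<le> 1"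
    and q_range: "\<And>n. 0 \<le> q n \<and> q n \<le> 1"
    and M_prob: "prob_space M"
    and M_sets: "sets M = sets Kspace"
    and M_cyl: "\<And>x n. measure M (cylinder x n) = markov_weight p q x n"
  shows "AE x in M. ((\<lambda>n. ln (measure M (cylinder x n)) / (- real n * ln 2)
                             - entropy_coeff M n) \<longlongrightarrow> 0) sequentially"
proof -
  interpret markov_measure p q M
    using assms by (intro markov_measure.intro markov_rule.intro markov_measure_axioms.intro) auto
  show ?thesis by (rule AE_normalized_info_tendsto_zero)
qed

end
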